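(* Let $\mathcal{D}$ be a domain with $\mathcal{SP}\subseteq\mathcal{D}\subseteq\mathcal{U}$. If there is an own-peak-only rule on $\mathcal{E}_{\mathcal{D}}$ that satisfies efficiency, the equal division guarantee, and not obvious manipulability (NOM), then $\mathcal{D}\subseteq\mathcal{C}$.
   Context: Let $N=\{1,\dots,n\}$ be a finite set of agents. $\mathcal{U}$ is the set of continuous complete preorders $R_i$ on $\mathbb{R}_+\cup\{\infty\}$ ($P_i$ strict, $I_i$ indifference), with peak $p(R_i)=\{x:xR_iy\ \forall y\}$, $\underline{p}(R_i)=\inf p(R_i)$, $\overline{p}(R_i)=\sup p(R_i)$. $R_i$ is single-peaked if $p(R_i)$ is a singleton and for $x,x'\in\mathbb{R}_+$, $xP_ix'$ whenever $x'<x\le p(R_i)$ or $p(R_i)\le x<x'$ ($\mathcal{SP}$ = set of these). $R_i$ is convex if $p(R_i)=[\underline{p}(R_i),\overline{p}(R_i)]$ and for $x,x'\in\mathbb{R}_+$, $xR_ix'$ whenever $x'<x\le\underline{p}(R_i)$ or $\overline{p}(R_i)\le x<x'$ ($\mathcal{C}$ = set of these). For $\mathcal{D}\subseteq\mathcal{U}$, an economy is $(R,\Omega)$, $R\in\mathcal{D}^n$, $\Omega>0$; $\mathcal{E}_{\mathcal{D}}$ is the set of economies; a rule is a map $\varphi:\mathcal{E}_{\mathcal{D}}\to\mathbb{R}^n_+$ with $\sum_j\varphi_j(R,\Omega)=\Omega$. Efficiency: no $x\in\mathbb{R}^n_+$ with $\sum_jx_j=\Omega$ has $x_iR_i\varphi_i(R,\Omega)$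 for all $i$ and $x_iP_i\varphi_i(R,\Omega)$ for some $i$. Own-peak-only: for $R_i'\in\mathcal{D}$ with $p(R_i')=p(R_i)$, $\varphi_i(R,\Omega)=\varphi_i(R_i',R_{-i},\Omega)$. Equal division guarantee: $\Omega/n\in p(R_i)$ implies $\varphi_i(R,\Omega)I_i\Omega/n$. Option set $O^\varphi(R_i,\Omega)=\{\varphi_i(R_i,R_{-i},\Omega):R_{-i}\in\mathcal{D}^{n-1}\}$; $R_i'\in\mathcal{D}$ is a manipulation at $(R_i,\Omega)$ if $\varphi_i(R_i',R_{-i},\Omega)P_i\varphi_i(R_i,R_{-i},\Omega)$ for some $R_{-i}$, an obvious manipulation if moreover each $x'\in O^\varphi(R_i',\Omega)$ satisfies $x'P_ix$ for some $x\in O^\varphi(R_i,\Omega)$; NOM means no obvious manipulation exists. *)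

theory Defs
  imports "HOL-Analysis.Analysis" "HOL-Library.Extended_Nonnegative_Real"
begin

text \<open>Consumption space R+ \<union> {\<infinity>} is modelled by ennreal (order topology = [0,\<infinity>]).
  A preference is a binary relation R x y meaning x R y (x weakly preferred to y).\<close>

type_synonym pref = "ennreal \<Rightarrow> ennreal \<Rightarrow> bool"

definition strict :: "pref \<Rightarrow> ennreal \<Rightarrow> ennreal \<Rightarrow> bool" where
  "strict R x y \<longleftrightarrow> R x y \<and> \<not> R y x"

definition indiff :: "pref \<Rightarrow> ennreal \<Rightarrow> ennreal \<Rightarrow> bool" where
  "indiff R x y \<longleftrightarrow> R x y \<and> R y x"

definition complete_preorder :: "pref \<Rightarrow> bool" where
  "complete_preorder R \<longleftrightarrow> (\<forall>x. R x x) \<and> (\<forall>x y z. R x y \<longrightarrow> R y z \<longrightarrow> R x z)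
      \<and> (\<forall>x y. R x y \<or> R y x)"

definition continuous_pref :: "pref \<Rightarrow> bool" where
  "continuous_pref R \<longleftrightarrow> (\<forall>x. closed {y. R y x} \<and> closed {y. R x y})"

definition U_dom :: "pref set" where
  "U_dom = {R. complete_preorder R \<and> continuous_pref R}"

definition peak :: "pref \<Rightarrow> ennreal set" where
  "peak R = {x. \<forall>y. R x y}"

definition SP_dom :: "pref set" where
  "SP_dom = {R \<in> U_dom. \<exists>p. peak R = {p} \<and>
      (\<forall>x x'. x \<noteq> \<infinity> \<and> x' \<noteq> \<infinity> \<and> ((x' < x \<and> x \<le> p) \<or> (p \<le> x \<and> x < x'))
          \<longrightarrow> strict R x x')}"

definition C_dom :: "pref set" where
  "C_dom = {R \<in> U_dom. peak R = {Inf (peak R) .. Sup (peak R)} \<and>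
      (\<forall>x x'. x \<noteq> \<infinity> \<and> x' \<noteq> \<infinity> \<and>
          ((x' < x \<and> x \<le> Inf (peak R)) \<or> (Sup (peak R) \<le> x \<and> x < x'))
          \<longrightarrow> R x x')}"

definition profiles :: "pref set \<Rightarrow> nat \<Rightarrow> (nat \<Rightarrow> pref) set" where
  "profiles D n = PiE {..<n} (\<lambda>_. D)"

type_synonym rule = "(nat \<Rightarrow> pref) \<Rightarrow> real \<Rightarrow> nat \<Rightarrow> real"

definition is_rule :: "pref set \<Rightarrow> nat \<Rightarrow> rule \<Rightarrow> bool" where
  "is_rule D n \<phi> \<longleftrightarrow> (\<forall>R \<in> profiles D n. \<forall>\<Omega>>0.
      (\<forall>i<n. 0 \<le> \<phi> R \<Omega> i) \<and> (\<Sum>i<n. \<phi> R \<Omega> i) = \<Omega>)"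

definition efficient :: "pref set \<Rightarrow> nat \<Rightarrow> rule \<Rightarrow> bool" where
  "efficient D n \<phi> \<longleftrightarrow> (\<forall>R \<in> profiles D n. \<forall>\<Omega>>0.
      \<not> (\<exists>x::nat \<Rightarrow> real. (\<forall>i<n. 0 \<le> x i) \<and> (\<Sum>i<n. x i) = \<Omega>
          \<and> (\<forall>i<n. R i (ennreal (x i)) (ennreal (\<phi> R \<Omega> i)))
          \<and> (\<exists>i<n. strict (R i) (ennreal (x i)) (ennreal (\<phi> R \<Omega> i)))))"

definition own_peak_only :: "pref set \<Rightarrow> nat \<Rightarrow> rule \<Rightarrow> bool" where
  "own_peak_only D n \<phi> \<longleftrightarrow> (\<forall>R \<in> profiles D n. \<forall>\<Omega>>0. \<forall>i<n. \<forall>R' \<in> D.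
      peak R' = peak (R i) \<longrightarrow> \<phi> R \<Omega> i = \<phi> (R(i := R')) \<Omega> i)"

definition equal_division_guarantee :: "pref set \<Rightarrow> nat \<Rightarrow> rule \<Rightarrow> bool" where
  "equal_division_guarantee D n \<phi> \<longleftrightarrow> (\<forall>R \<in> profiles D n. \<forall>\<Omega>>0. \<forall>i<n.
      ennreal (\<Omega> / real n) \<in> peak (R i) \<longrightarrow>
      indiff (R i) (ennreal (\<phi> R \<Omega> i)) (ennreal (\<Omega> / real n)))"

definition option_set :: "pref set \<Rightarrow> nat \<Rightarrow> rule \<Rightarrow> nat \<Rightarrow> pref \<Rightarrow> real \<Rightarrow> real set" where
  "option_set D n \<phi> i Ri \<Omega> = {\<phi> R \<Omega> i | R. R \<in> profiles D n \<and> R i = Ri}"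

definition manipulation :: "pref set \<Rightarrow> nat \<Rightarrow> rule \<Rightarrow> nat \<Rightarrow> pref \<Rightarrow> real \<Rightarrow> pref \<Rightarrow> bool" where
  "manipulation D n \<phi> i Ri \<Omega> Ri' \<longleftrightarrow> Ri' \<in> D \<and>
     (\<exists>R \<in> profiles D n. R i = Ri \<and>
        strict Ri (ennreal (\<phi> (R(i := Ri')) \<Omega> i)) (ennreal (\<phi> R \<Omega> i)))"

definition obvious_manipulation :: "pref set \<Rightarrow> nat \<Rightarrow> rule \<Rightarrow> nat \<Rightarrow> pref \<Rightarrow> real \<Rightarrow> pref \<Rightarrow> bool" where
  "obvious_manipulation D n \<phi> i Ri \<Omega> Ri' \<longleftrightarrow> manipulation D n \<phi> i Ri \<Omega> Ri' \<and>
     (\<forall>x' \<in> option_set D n \<phi> i Ri' \<Omega>. \<exists>x \<in> option_set D n \<phi> i Ri \<Omega>.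
        strict Ri (ennreal x') (ennreal x))"

definition NOM :: "pref set \<Rightarrow> nat \<Rightarrow> rule \<Rightarrow> bool" where
  "NOM D n \<phi> \<longleftrightarrow> (\<forall>i<n. \<forall>Ri \<in> D. \<forall>\<Omega>>0. \<forall>Ri'.
      \<not> obvious_manipulation D n \<phi> i Ri \<Omega> Ri')"

end

theory Submission
  imports Defs
begin

text \<open>Suppose some \<open>R \<in> D\<close> is not convex. Using continuity one finds finite \<open>b < w < t\<close> such
  that \<open>b\<close> is weakly preferred to every point of \<open>[w, t]\<close> while \<open>t\<close> is strictly preferred to
  \<open>w\<close>. Let agent 0 report \<open>R\<close>, let \<open>\<Omega> = n t\<close>, give every agent other than 0 and 1 a
  single-peaked preference with peak \<open>t\<close> (so it receives \<open>t\<close>), and give agent 1 a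
  single-peaked preference with peak \<open>q = 2 t - w\<close> whose utility falls off to the right of
  \<open>q\<close> with an arbitrary steepness \<open>K\<close>. By own-peak-only, agent 1's allotment \<open>s\<close> does
  not depend on \<open>K\<close>. Equal division guarantee and NOM imply that everybody weakly prefers
  the allotment to \<open>t\<close>; for agent 1 and all \<open>K\<close> this forces \<open>t \<le> s \<le> q\<close>, so agent 0
  receives \<open>2 t - s \<in> [w, t]\<close>, and \<open>2 t - s \<noteq> w\<close> gives \<open>s < q\<close>. For a gentle enough \<open>K\<close>,
  agent 1 strictly prefers \<open>2 t - b\<close> to \<open>s\<close>, so moving agent 0 to \<open>b\<close> and agent 1 to
  \<open>2 t - b\<close> is a Pareto improvement, contradicting efficiency.\<close>

section \<open>Tent-shaped single-peaked preferences\<close>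

lemma continuous_on_enn2real_finite:
  fixes f :: "'a::topological_space \<Rightarrow> ennreal"
  assumes f: "continuous_on UNIV f" and fin: "\<And>x. f x \<noteq> top"
  shows "continuous_on UNIV (\<lambda>x. enn2real (f x))"
  unfolding continuous_on_def
proof
  fix x :: 'a
  have "(f \<longlongrightarrow> ennreal (enn2real (f x))) (at x within UNIV)"
    using f fin by (simp add: continuous_on_def ennreal_enn2real_if)
  then show "((\<lambda>x. enn2real (f x)) \<longlongrightarrow> enn2real (f x)) (at x within UNIV)"
    by (rule tendsto_enn2real) simp
qed

definition recip_succ :: "ennreal \<Rightarrow> real" where
  "recip_succ x = enn2real (inverse (1 + x))"

lemma continuous_on_recip_succ: "continuous_on UNIV recip_succ"
  unfolding recip_succ_def
proof (rule continuous_on_enn2real_finite)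
  show "continuous_on UNIV (\<lambda>x::ennreal. inverse (1 + x))"
    by (intro continuous_intros)
qed simp

lemma recip_succ_ennreal:
  assumes "0 \<le> r" shows "recip_succ (ennreal r) = 1 / (1 + r)"
proof -
  have sum: "1 + ennreal r = ennreal (1 + r)"
    using assms by (simp add: ennreal_plus[symmetric])
  have "inverse (1 + ennreal r) = ennreal (inverse (1 + r))"
    unfolding sum using assms by (intro inverse_ennreal) simp
  then show ?thesis
    using assms unfolding recip_succ_def by (simp add: divide_inverse)
qed

lemma recip_succ_top: "recip_succ top = 0"
  unfolding recip_succ_def by simp

lemma recip_succ_strict_antimono:
  assumes "x < y" shows "recip_succ y < recip_succ x"
proof -
  obtain r where r: "x = ennreal r" "0 \<le> r"
    using assms by (cases x) auto
  show ?thesis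
  proof (cases y)
    case (real s)
    then have "r < s" using assms r by (simp add: ennreal_less_iff)
    then show ?thesis using r real by (simp add: recip_succ_ennreal frac_less2)
  qed (use r in \<open>simp add: recip_succ_top recip_succ_ennreal\<close>)
qed

lemma recip_succ_antimono: "x \<le> y \<Longrightarrow> recip_succ y \<le> recip_succ x"
  using recip_succ_strict_antimono by (cases "x = y") (auto simp: order_le_less)

text \<open>Only the right branch depends on \<open>K\<close>; it falls with steepness \<open>K\<close> but stays
  bounded, so the utility is continuous at \<open>\<infinity>\<close>.\<close>

definition tent :: "real \<Rightarrow> real \<Rightarrow> ennreal \<Rightarrow> real" where
  "tent q K x = min (enn2real (min x (ennreal q)) - q) (K * (recip_succ x - recip_succ (ennreal q)))"

lemma continuous_on_tent: "continuous_on UNIV (tent q K)"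
proof -
  have "continuous_on UNIV (\<lambda>x. enn2real (min x (ennreal q)))"
  proof (rule continuous_on_enn2real_finite)
    show "continuous_on UNIV (\<lambda>x. min x (ennreal q))"
      by (intro continuous_intros)
    show "min x (ennreal q) \<noteq> top" for x
      by (metis ennreal_neq_top min.cobounded2 top_unique)
  qed
  then show ?thesis
    unfolding tent_def using continuous_on_recip_succ by (intro continuous_intros)
qed

lemma tent_left:
  assumes "0 \<le> K" "0 \<le> r" "r \<le> q"
  shows "tent q K (ennreal r) = r - q"
proof -
  have "0 \<le> K * (recip_succ (ennreal r) - recip_succ (ennreal q))"
    using assms by (simp add: recip_succ_antimono)
  then show ?thesis
    using assms by (simp add: tent_def min_def)
qed

lemma tent_right:
  assumes "0 \<le> q" "0 \<le> K" "ennreal q \<le> x"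
  shows "tent q K x = K * (recip_succ x - recip_succ (ennreal q))"
proof -
  have "K * (recip_succ x - recip_succ (ennreal q)) \<le> 0"
    using assms by (simp add: mult_nonneg_nonpos recip_succ_antimono)
  moreover have "enn2real (min x (ennreal q)) = q"
    using assms by (simp add: min_def)
  ultimately show ?thesis
    by (simp add: tent_def min_def)
qed

lemma tent_less_peak:
  assumes "0 \<le> q" "0 < K" "x \<noteq> ennreal q"
  shows "tent q K x < tent q K (ennreal q)"
proof (cases "x \<le> ennreal q")
  case True
  then obtain r where r: "x = ennreal r" "0 \<le> r" "r < q"
    using assms by (cases x) (auto simp: order_le_less ennreal_less_iff)
  then show ?thesis
    using assms by (simp add: tent_left)
next
  case False
  then have "recip_succ x < recip_succ (ennreal q)"
    by (intro recip_succ_strict_antimono) simp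
  then show ?thesis
    using assms False by (simp add: tent_left tent_right mult_pos_neg)
qed

lemma tent_attains_value_right:
  assumes "0 \<le> q" "q < y" "v < 0"
  obtains K where "0 < K" "tent q K (ennreal y) = v"
proof
  define d where "d = recip_succ (ennreal y) - recip_succ (ennreal q)"
  have "d < 0"
    using assms unfolding d_def by (simp add: recip_succ_strict_antimono ennreal_less_iff)
  then show "0 < v / d"
    using assms by (simp add: divide_neg_neg)
  then show "tent q (v / d) (ennreal y) = v"
    using assms \<open>d < 0\<close> by (simp add: tent_right d_def[symmetric])
qed

definition utility_pref :: "(ennreal \<Rightarrow> real) \<Rightarrow> pref" where
  "utility_pref u x y \<longleftrightarrow> u y \<le> u x"

lemma utility_pref_in_U_dom:
  assumes "continuous_on UNIV u"
  shows "utility_pref u \<in> U_dom"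
  unfolding U_dom_def complete_preorder_def continuous_pref_def utility_pref_def
proof (intro CollectI conjI allI)
  show "closed {y. u x \<le> u y}" "closed {y. u y \<le> u x}" for x
    using assms by (auto intro: closed_Collect_le continuous_on_const)
qed auto

lemma peak_utility_pref:
  assumes "\<And>x. x \<noteq> p \<Longrightarrow> u x < u p"
  shows "peak (utility_pref u) = {p}"
proof -
  have "u y \<le> u p" for y
    using assms by (cases "y = p") (auto intro: less_imp_le)
  then show ?thesis
    using assms unfolding peak_def utility_pref_def by (force simp: not_le[symmetric])
qed

lemma peak_tent_pref: "0 \<le> q \<Longrightarrow> 0 < K \<Longrightarrow> peak (utility_pref (tent q K)) = {ennreal q}"
  by (intro peak_utility_pref tent_less_peak)

lemma tent_pref_in_SP_dom:
  assumes q: "0 \<le> q" and K: "0 < K"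
  shows "utility_pref (tent q K) \<in> SP_dom"
  unfolding SP_dom_def
proof (intro CollectI conjI exI[of _ "ennreal q"] allI impI)
  show "utility_pref (tent q K) \<in> U_dom"
    by (intro utility_pref_in_U_dom continuous_on_tent)
  show "peak (utility_pref (tent q K)) = {ennreal q}"
    using q K by (rule peak_tent_pref)
  fix x x' :: ennreal
  assume "x \<noteq> \<infinity> \<and> x' \<noteq> \<infinity> \<and> (x' < x \<and> x \<le> ennreal q \<or> ennreal q \<le> x \<and> x < x')"
  then consider "x' < x" "x \<le> ennreal q" "x \<noteq> top" | "ennreal q \<le> x" "x < x'" "x' \<noteq> top"
    by auto
  then have "tent q K x' < tent q K x"
  proof cases
    case 1
    then obtain r r' where "x = ennreal r" "0 \<le> r" "x' = ennreal r'" "0 \<le> r'"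
      by (cases x; cases x') auto
    then show ?thesis
      using 1 q K by (simp add: tent_left ennreal_less_iff)
  next
    case 2
    then show ?thesis
      using q K recip_succ_strict_antimono[of x x'] by (simp add: tent_right)
  qed
  then show "strict (utility_pref (tent q K)) x x'"
    unfolding strict_def utility_pref_def by simp
qed

lemma tent_pref_all_steepness_bounds:
  assumes "0 \<le> s" "0 \<le> t" "t \<le> q"
    and pref: "\<And>K. 0 < K \<Longrightarrow> utility_pref (tent q K) (ennreal s) (ennreal t)"
  shows "t \<le> s" "s \<le> q"
proof -
  show "t \<le> s"
  proof (rule ccontr)
    assume "\<not> t \<le> s"
    then show False
      using assms pref[of 1] by (simp add: utility_pref_def tent_left)
  qed
  show "s \<le> q"
  proof (rule ccontr)
    assume "\<not> s \<le> q"
    then obtain K where "0 < K" "tent q K (ennreal s) = t - q - 1"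
      using assms tent_attains_value_right[of q s "t - q - 1"] by auto
    then show False
      using assms pref[of K] by (simp add: utility_pref_def tent_left)
  qed
qed

section \<open>Continuous complete preorders on \<open>[0, \<infinity>]\<close>\<close>

lemma
  assumes "R \<in> U_dom"
  shows U_dom_refl: "R x x"
    and U_dom_total: "R x y \<or> R y x"
    and U_dom_trans: "R x y \<Longrightarrow> R y z \<Longrightarrow> R x z"
  using assms unfolding U_dom_def complete_preorder_def by blast+

lemma U_dom_strict_if_not_pref: "R \<in> U_dom \<Longrightarrow> \<not> R x y \<Longrightarrow> strict R y x"
  unfolding strict_def by (metis U_dom_total)

lemma
  assumes "R \<in> U_dom"
  shows closed_upper_contour: "closed {y. R y x}"
    and closed_lower_contour: "closed {y. R x y}"
  using assms unfolding U_dom_def continuous_pref_def by auto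

lemma U_dom_finite_has_best:
  assumes "R \<in> U_dom" and "finite X"
  shows "\<exists>m. \<forall>x\<in>X. R m x"
  using assms(2)
proof (induction X rule: finite_induct)
  case (insert x X)
  then obtain m where m: "\<forall>z\<in>X. R m z"
    by blast
  show ?case
  proof (cases "R m x")
    case False
    then have "R x m"
      using U_dom_total[OF assms(1)] by blast
    then have "\<forall>z\<in>insert x X. R x z"
      using m U_dom_refl[OF assms(1)] U_dom_trans[OF assms(1)] by auto
    then show ?thesis ..
  qed (use m in blast)
qed simp

lemma peak_eq_Inter: "peak R = (\<Inter>x. {y. R y x})"
  unfolding peak_def by auto

lemma peak_nonempty:
  assumes U: "R \<in> U_dom"
  shows "peak R \<noteq> {}"
proof -
  have "UNIV \<inter> (\<Inter>x. {y. R y x}) \<noteq> {}"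
  proof (rule compact_imp_fip_image[OF compact_UNIV])
    show "closed {y. R y x}" for x
      using U by (rule closed_upper_contour)
    fix X :: "ennreal set"
    assume "finite X"
    then obtain m where "\<forall>x\<in>X. R m x"
      using U_dom_finite_has_best[OF U] by blast
    then show "UNIV \<inter> (\<Inter>x\<in>X. {y. R y x}) \<noteq> {}"
      by blast
  qed
  then show ?thesis
    unfolding peak_eq_Inter by simp
qed

lemma closed_peak: "R \<in> U_dom \<Longrightarrow> closed (peak R)"
  unfolding peak_eq_Inter by (intro closed_INT) (auto intro: closed_upper_contour)

lemma
  assumes "R \<in> U_dom"
  shows Inf_peak_in_peak: "Inf (peak R) \<in> peak R"
    and Sup_peak_in_peak: "Sup (peak R) \<in> peak R"
  by (intro closed_contains_Inf_cl closed_contains_Sup_cl closed_peak peak_nonempty assms)+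

lemma pref_of_peak: "p \<in> peak R \<Longrightarrow> R p x"
  unfolding peak_def by blast

lemma in_peak_if_pref_peak:
  assumes "R \<in> U_dom" "p \<in> peak R" "R x p"
  shows "x \<in> peak R"
  using assms U_dom_trans[OF assms(1) assms(3)] unfolding peak_def by blast

lemma better_point_above_finite:
  assumes U: "R \<in> U_dom" and "\<not> R y z" "y < z"
  obtains t where "y < t" "t < top" "\<not> R y t"
proof (cases "z = top")
  case True
  have "open {w. \<not> R y w}"
    using U by (intro open_Collect_neg closed_lower_contour)
  then obtain c where "c < top" "{c<..top} \<subseteq> {w. \<not> R y w}"
    using open_left[of _ top y] assms True by auto
  moreover obtain t where "max c y < t" "t < top"
    using \<open>c < top\<close> \<open>y < z\<close> True dense[of "max c y" top] by auto
  ultimately show ?thesis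
    using that by auto
next
  case False
  then show ?thesis
    using that assms top.not_eq_extremum by blast
qed

lemma first_return_to_level:
  assumes U: "R \<in> U_dom" and "x \<le> z" "R z x'" "\<not> R x x'"
  obtains s where "x < s" "s \<le> z" "R s x'" "\<And>a. x \<le> a \<Longrightarrow> a \<le> s \<Longrightarrow> R x' a"
proof -
  define S where "S = {x..} \<inter> {w. R w x'}"
  have "closed S"
    unfolding S_def using U by (intro closed_Int closed_atLeast closed_upper_contour)
  moreover have "z \<in> S"
    unfolding S_def using assms by simp
  ultimately have "Inf S \<in> S"
    using closed_contains_Inf_cl by blast
  moreover have "Inf S \<le> z"
    using \<open>z \<in> S\<close> by (rule Inf_lower)
  ultimately have s: "x \<le> Inf S" "R (Inf S) x'" "Inf S \<le> z"
    unfolding S_def by auto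
  then have "x < Inf S"
    using assms(4) by (cases "x = Inf S") auto
  have "{x..<Inf S} \<subseteq> {w. R x' w}"
  proof
    fix a assume "a \<in> {x..<Inf S}"
    then have "a \<notin> S"
      using Inf_lower[of a S] by auto
    then show "a \<in> {w. R x' w}"
      using \<open>a \<in> {x..<Inf S}\<close> U_dom_total[OF U] unfolding S_def by auto
  qed
  then have "{x..Inf S} \<subseteq> {w. R x' w}"
    using closure_minimal[OF _ closed_lower_contour[OF U]] closure_atLeastLessThan[OF \<open>x < Inf S\<close>]
    by metis
  then show ?thesis
    by (intro that[OF \<open>x < Inf S\<close> s(3) s(2)]) auto
qed

section \<open>Consequences of the axioms on the rule\<close>

lemma profiles_memberD: "R \<in> profiles D n \<Longrightarrow> k < n \<Longrightarrow> R k \<in> D"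
  unfolding profiles_def by auto

lemma profiles_fun_upd: "R \<in> profiles D n \<Longrightarrow> k < n \<Longrightarrow> R' \<in> D \<Longrightarrow> R(k := R') \<in> profiles D n"
  unfolding profiles_def by (auto simp: PiE_iff extensional_def)

lemma sum_lessThan_pair:
  fixes f :: "nat \<Rightarrow> 'a::comm_monoid_add"
  assumes "i < n" "j < n" "i \<noteq> j"
  shows "(\<Sum>k<n. f k) = f i + f j + (\<Sum>k\<in>{..<n} - {i, j}. f k)"
proof -
  have "(\<Sum>k<n. f k) = f i + (\<Sum>k\<in>{..<n} - {i}. f k)"
    using assms by (simp add: sum.remove)
  also have "(\<Sum>k\<in>{..<n} - {i}. f k) = f j + (\<Sum>k\<in>{..<n} - {i} - {j}. f k)"
    using assms by (intro sum.remove) auto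
  finally show ?thesis
    by (simp add: add.assoc Diff_insert2[of _ i "{j}"])
qed

text \<open>All agents other than 0 and 1 are peaked at \<open>t\<close>, the equal share of \<open>\<Omega> = n t\<close>.\<close>

definition test_profile :: "nat \<Rightarrow> pref \<Rightarrow> real \<Rightarrow> real \<Rightarrow> real \<Rightarrow> nat \<Rightarrow> pref" where
  "test_profile n R0 t q K k =
    (if n \<le> k then undefined else if k = 0 then R0 else if k = 1 then utility_pref (tent q K)
     else utility_pref (tent t 1))"

lemma test_profile_0: "0 < n \<Longrightarrow> test_profile n R0 t q K 0 = R0"
  and test_profile_1: "1 < n \<Longrightarrow> test_profile n R0 t q K 1 = utility_pref (tent q K)"
  by (simp_all add: test_profile_def)

locale equal_division_rule =
  fixes D :: "pref set" and n :: nat and \<phi> :: rule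
  assumes SP_sub: "SP_dom \<subseteq> D" and D_sub: "D \<subseteq> U_dom"
    and rule: "is_rule D n \<phi>" and edg: "equal_division_guarantee D n \<phi>"
begin

lemma tent_pref_in_D: "0 \<le> q \<Longrightarrow> 0 < K \<Longrightarrow> utility_pref (tent q K) \<in> D"
  using tent_pref_in_SP_dom SP_sub by blast

lemma test_profile_in_profiles:
  assumes "R0 \<in> D" "0 < t" "0 \<le> q" "0 < K"
  shows "test_profile n R0 t q K \<in> profiles D n"
  unfolding profiles_def test_profile_def using assms tent_pref_in_D[of t 1]
  by (auto simp: PiE_iff extensional_def tent_pref_in_D)

lemma allotment_nonneg: "R \<in> profiles D n \<Longrightarrow> 0 < \<Omega> \<Longrightarrow> k < n \<Longrightarrow> 0 \<le> \<phi> R \<Omega> k"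
  using rule unfolding is_rule_def by blast

lemma allotment_sum: "R \<in> profiles D n \<Longrightarrow> 0 < \<Omega> \<Longrightarrow> (\<Sum>k<n. \<phi> R \<Omega> k) = \<Omega>"
  using rule unfolding is_rule_def by blast

lemma allotment_tent_at_equal_share:
  assumes R: "R \<in> profiles D n" and \<Omega>: "0 < \<Omega>" and k: "k < n"
    and Rk: "R k = utility_pref (tent (\<Omega> / real n) K)" and K: "0 < K"
  shows "\<phi> R \<Omega> k = \<Omega> / real n"
proof -
  have peak: "peak (R k) = {ennreal (\<Omega> / real n)}"
    unfolding Rk using \<Omega> K by (intro peak_tent_pref) auto
  have "indiff (R k) (ennreal (\<phi> R \<Omega> k)) (ennreal (\<Omega> / real n))"
    using edg R \<Omega> k peak unfolding equal_division_guarantee_def by simp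
  then have "ennreal (\<phi> R \<Omega> k) \<in> peak (R k)"
    using peak D_sub profiles_memberD[OF R k] in_peak_if_pref_peak
    unfolding indiff_def by blast
  then show ?thesis
    using peak allotment_nonneg[OF R \<Omega> k] \<Omega> by simp
qed

text \<open>Reporting the tent preference with peak \<open>\<Omega> / n\<close> secures exactly \<open>\<Omega> / n\<close>, so an
  allotment worse than \<open>\<Omega> / n\<close> would make that report an obvious manipulation.\<close>

lemma allotment_weakly_preferred_to_equal_share:
  assumes nom: "NOM D n \<phi>" and R: "R \<in> profiles D n" and \<Omega>: "0 < \<Omega>" and k: "k < n"
  shows "R k (ennreal (\<phi> R \<Omega> k)) (ennreal (\<Omega> / real n))"
proof (rule ccontr)
  assume worse: "\<not> R k (ennreal (\<phi> R \<Omega> k)) (ennreal (\<Omega> / real n))"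
  define R' where "R' = utility_pref (tent (\<Omega> / real n) 1)"
  have R': "R' \<in> D"
    unfolding R'_def using \<Omega> by (intro tent_pref_in_D) auto
  have Rk: "R k \<in> D"
    using R k by (rule profiles_memberD)
  have strict: "strict (R k) (ennreal (\<Omega> / real n)) (ennreal (\<phi> R \<Omega> k))"
    using D_sub Rk by (intro U_dom_strict_if_not_pref worse) auto
  have secured: "\<phi> R0 \<Omega> k = \<Omega> / real n" if "R0 \<in> profiles D n" "R0 k = R'" for R0
    using allotment_tent_at_equal_share[OF that(1) \<Omega> k] that(2) unfolding R'_def by simp
  have "obvious_manipulation D n \<phi> k (R k) \<Omega> R'"
    unfolding obvious_manipulation_def manipulation_def
  proof (intro conjI ballI)
    show "R' \<in> D"
      by (rule R')
    have "\<phi> (R(k := R')) \<Omega> k = \<Omega> / real n"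
      using secured profiles_fun_upd[OF R k R'] by simp
    then show "\<exists>R0\<in>profiles D n. R0 k = R k \<and>
        strict (R k) (ennreal (\<phi> (R0(k := R')) \<Omega> k)) (ennreal (\<phi> R0 \<Omega> k))"
      using R strict by (intro bexI[OF _ R]) simp
    fix x' assume "x' \<in> option_set D n \<phi> k R' \<Omega>"
    then have "x' = \<Omega> / real n"
      using secured unfolding option_set_def by auto
    moreover have "\<phi> R \<Omega> k \<in> option_set D n \<phi> k (R k) \<Omega>"
      unfolding option_set_def using R by blast
    ultimately show "\<exists>x\<in>option_set D n \<phi> k (R k) \<Omega>. strict (R k) (ennreal x') (ennreal x)"
      using strict by blast
  qed
  then show False
    using nom k Rk \<Omega> unfolding NOM_def by blast
qed

lemma allotment_pair_sum:
  assumes R: "R \<in> profiles D n" and "0 < t" "i < n" "j < n" "i \<noteq> j"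
    and others: "\<And>k. k < n \<Longrightarrow> k \<noteq> i \<Longrightarrow> k \<noteq> j \<Longrightarrow> R k = utility_pref (tent t 1)"
  shows "\<phi> R (real n * t) i + \<phi> R (real n * t) j = 2 * t"
proof -
  have \<Omega>: "0 < real n * t" "real n * t / real n = t"
    using assms by auto
  have "(\<Sum>k\<in>{..<n} - {i, j}. \<phi> R (real n * t) k) = (\<Sum>k\<in>{..<n} - {i, j}. t)"
    using allotment_tent_at_equal_share[OF R \<Omega>(1)] others \<Omega>(2) by (intro sum.cong) auto
  also have "\<dots> = (real n - 2) * t"
    using assms by (simp add: card_Diff_subset)
  finally have "real n * t = \<phi> R (real n * t) i + \<phi> R (real n * t) j + (real n - 2) * t"
    using allotment_sum[OF R \<Omega>(1)] sum_lessThan_pair[OF assms(3-5), of "\<phi> R (real n * t)"]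
    by simp
  then show ?thesis
    by (simp add: algebra_simps)
qed

end

locale efficient_NOM_rule = equal_division_rule +
  assumes two_agents: "2 \<le> n" and opo: "own_peak_only D n \<phi>"
    and eff: "efficient D n \<phi>" and nom: "NOM D n \<phi>"
begin

lemma no_bilateral_improvement:
  assumes R: "R \<in> profiles D n" and \<Omega>: "0 < \<Omega>" and ij: "i < n" "j < n" "i \<noteq> j"
    and "0 \<le> b" "0 \<le> y" and trade: "b + y = \<phi> R \<Omega> i + \<phi> R \<Omega> j"
    and i_ok: "R i (ennreal b) (ennreal (\<phi> R \<Omega> i))"
    and j_better: "strict (R j) (ennreal y) (ennreal (\<phi> R \<Omega> j))"
  shows False
proof -
  define x where "x = (\<phi> R \<Omega>)(i := b, j := y)"
  have "\<forall>k<n. 0 \<le> x k"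
    unfolding x_def using assms allotment_nonneg[OF R \<Omega>] by auto
  moreover have "(\<Sum>k<n. x k) = \<Omega>"
    using sum_lessThan_pair[OF ij, of x] sum_lessThan_pair[OF ij, of "\<phi> R \<Omega>"]
      allotment_sum[OF R \<Omega>] trade ij(3)
    unfolding x_def by simp
  moreover have "R k (ennreal (x k)) (ennreal (\<phi> R \<Omega> k))" if "k < n" for k
    using i_ok j_better ij(3) U_dom_refl D_sub profiles_memberD[OF R that]
    unfolding x_def strict_def by auto
  moreover have "strict (R j) (ennreal (x j)) (ennreal (\<phi> R \<Omega> j))"
    using j_better unfolding x_def by simp
  ultimately show False
    using eff R \<Omega> ij(2) unfolding efficient_def by blast
qed

lemma test_profile_allotments:
  assumes R0: "R0 \<in> D" and t: "0 < t" and q: "t \<le> q"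
  obtains s where "t \<le> s" "s \<le> q"
    and "\<And>K. 0 < K \<Longrightarrow> \<phi> (test_profile n R0 t q K) (real n * t) 1 = s"
    and "\<And>K. 0 < K \<Longrightarrow> \<phi> (test_profile n R0 t q K) (real n * t) 0 = 2 * t - s"
proof -
  let ?R = "test_profile n R0 t q" and ?\<Omega> = "real n * t"
  have agents: "(0::nat) < n" "(1::nat) < n"
    using two_agents by auto
  have \<Omega>: "0 < ?\<Omega>" "?\<Omega> / real n = t"
    using agents t by auto
  have R: "?R K \<in> profiles D n" if "0 < K" for K
    using R0 t q that by (intro test_profile_in_profiles) auto
  define s where "s = \<phi> (?R 1) ?\<Omega> 1"
  have j_gets: "\<phi> (?R K) ?\<Omega> 1 = s" if "0 < K" for K
  proof -
    have "?R K = (?R 1)(1 := utility_pref (tent q K))"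
      using agents by (intro ext) (simp add: test_profile_def)
    moreover have "peak (utility_pref (tent q K)) = peak (?R 1 1)"
      unfolding test_profile_1[OF agents(2)] using t q that by (simp add: peak_tent_pref)
    ultimately show ?thesis
      using opo R[of 1] \<Omega>(1) agents tent_pref_in_D[of q K] t q that
      unfolding own_peak_only_def s_def by simp
  qed
  have "utility_pref (tent q K) (ennreal s) (ennreal t)" if "0 < K" for K
    using allotment_weakly_preferred_to_equal_share[OF nom R[OF that] \<Omega>(1) agents(2)]
    unfolding test_profile_1[OF agents(2)] j_gets[OF that] \<Omega>(2) .
  then have "t \<le> s" "s \<le> q"
    using tent_pref_all_steepness_bounds[of s t q] allotment_nonneg[OF R[of 1] \<Omega>(1) agents(2)] t q
    unfolding s_def by auto
  moreover have "\<phi> (?R K) ?\<Omega> 0 = 2 * t - s" if "0 < K" for K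
    using allotment_pair_sum[OF R[OF that] t agents] j_gets[OF that]
    by (simp add: test_profile_def)
  ultimately show ?thesis
    using that j_gets by blast
qed

lemma no_dominated_reversal:
  assumes R0: "R0 \<in> D" and b: "0 \<le> b" "b < w" and w: "w < t"
    and reversal: "\<not> R0 (ennreal w) (ennreal t)"
    and dominated: "\<And>a. w \<le> a \<Longrightarrow> a \<le> t \<Longrightarrow> R0 (ennreal b) (ennreal a)"
  shows False
proof -
  define q where "q = 2 * t - w"
  let ?R = "test_profile n R0 t q" and ?\<Omega> = "real n * t"
  have agents: "(0::nat) < n" "(1::nat) < n"
    using two_agents by auto
  have t: "0 < t" and q: "t < q"
    using b w by (auto simp: q_def)
  obtain s where s: "t \<le> s" "s \<le> q"
    and j_gets: "\<And>K. 0 < K \<Longrightarrow> \<phi> (?R K) ?\<Omega> 1 = s"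
    and i_gets: "\<And>K. 0 < K \<Longrightarrow> \<phi> (?R K) ?\<Omega> 0 = 2 * t - s"
    using test_profile_allotments[OF R0 t less_imp_le[OF q]] by blast
  have R: "?R K \<in> profiles D n" if "0 < K" for K
    using R0 t q that by (intro test_profile_in_profiles) auto
  have \<Omega>: "0 < ?\<Omega>" "?\<Omega> / real n = t"
    using agents t by auto
  have "R0 (ennreal (2 * t - s)) (ennreal t)"
    using allotment_weakly_preferred_to_equal_share[OF nom R[of 1] \<Omega>(1) agents(1)]
    using agents by (simp add: test_profile_0 i_gets \<Omega>(2))
  then have "s < q"
    using reversal s(2) by (cases "s = q") (auto simp: q_def)
  moreover have "q < 2 * t - b"
    using b by (simp add: q_def)
  ultimately obtain K where K: "0 < K" "tent q K (ennreal (2 * t - b)) = (s - q) / 2"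
    using tent_attains_value_right[of q "2 * t - b" "(s - q) / 2"] t q by auto
  have "tent q K (ennreal s) = s - q"
    using K s t by (simp add: tent_left)
  then have "strict (?R K 1) (ennreal (2 * t - b)) (ennreal (\<phi> (?R K) ?\<Omega> 1))"
    unfolding test_profile_1[OF agents(2)] j_gets[OF K(1)] strict_def utility_pref_def
    using K \<open>s < q\<close> by simp
  moreover have "?R K 0 (ennreal b) (ennreal (\<phi> (?R K) ?\<Omega> 0))"
    unfolding test_profile_0[OF agents(1)] i_gets[OF K(1)] using dominated s by (simp add: q_def)
  ultimately show False
    using no_bilateral_improvement[OF R[OF K(1)] \<Omega>(1) agents, of b "2 * t - b"] b w
      i_gets[OF K(1)] j_gets[OF K(1)]
    by simp
qed

lemma pref_lower_endpoint:
  assumes Ri: "Ri \<in> D" and "b < w" "w < t" "t < top"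
    and dominated: "\<And>a. w \<le> a \<Longrightarrow> a \<le> t \<Longrightarrow> Ri b a"
  shows "Ri w t"
proof (rule ccontr)
  assume reversal: "\<not> Ri w t"
  obtain rb rw rt where r: "b = ennreal rb" "0 \<le> rb" "w = ennreal rw" "t = ennreal rt"
    using assms by (cases b; cases w; cases t) auto
  show False
  proof (rule no_dominated_reversal[OF Ri r(2)])
    show "rb < rw" "rw < rt"
      using assms r by (auto simp: ennreal_less_iff)
    show "\<not> Ri (ennreal rw) (ennreal rt)"
      using reversal r by simp
    show "Ri (ennreal rb) (ennreal a)" if "rw \<le> a" "a \<le> rt" for a
      using dominated[of "ennreal a"] that r by (simp add: ennreal_leI)
  qed
qed

lemma peak_eq_interval:
  assumes R: "R \<in> D"
  shows "peak R = {Inf (peak R)..Sup (peak R)}"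
proof
  have U: "R \<in> U_dom"
    using R D_sub by blast
  show "peak R \<subseteq> {Inf (peak R)..Sup (peak R)}"
    by (auto intro: Inf_lower Sup_upper)
  show "{Inf (peak R)..Sup (peak R)} \<subseteq> peak R"
  proof
    fix y assume y: "y \<in> {Inf (peak R)..Sup (peak R)}"
    show "y \<in> peak R"
    proof (rule ccontr)
      assume y_not: "y \<notin> peak R"
      then have "Inf (peak R) < y" "y < Sup (peak R)"
        using y Inf_peak_in_peak[OF U] Sup_peak_in_peak[OF U] by (auto simp: order_le_less)
      moreover have "\<not> R y (Sup (peak R))"
        using in_peak_if_pref_peak[OF U Sup_peak_in_peak[OF U]] y_not by blast
      ultimately obtain t where t: "y < t" "t < top" "\<not> R y t"
        using better_point_above_finite[OF U] by blast
      have "R y t"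
        using Inf_peak_in_peak[OF U] pref_of_peak
        by (intro pref_lower_endpoint[OF R \<open>Inf (peak R) < y\<close> t(1,2)])
      then show False
        using t(3) by simp
    qed
  qed
qed

lemma pref_decreasing_above_peak:
  assumes R: "R \<in> D" and "Sup (peak R) \<le> x" "x < x'" "x' < top"
  shows "R x x'"
proof -
  have hi: "Sup (peak R) \<in> peak R"
    using R D_sub Sup_peak_in_peak by blast
  show ?thesis
  proof (cases "x = Sup (peak R)")
    case False
    then have "Sup (peak R) < x"
      using assms by simp
    then show ?thesis
      using hi pref_of_peak by (intro pref_lower_endpoint[OF R _ assms(3,4)])
  qed (use hi pref_of_peak in simp)
qed

lemma pref_increasing_below_peak:
  assumes R: "R \<in> D" and "x' < x" "x \<le> Inf (peak R)"
  shows "R x x'"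
proof (rule ccontr)
  assume not_pref: "\<not> R x x'"
  have U: "R \<in> U_dom"
    using R D_sub by blast
  have lo: "Inf (peak R) \<in> peak R"
    using U by (rule Inf_peak_in_peak)
  then obtain s where s: "x < s" "s \<le> Inf (peak R)" "R s x'" "\<And>a. x \<le> a \<Longrightarrow> a \<le> s \<Longrightarrow> R x' a"
    using first_return_to_level[OF U assms(3) pref_of_peak[OF lo] not_pref] by blast
  have "s < top"
  proof (rule ccontr)
    assume "\<not> s < top"
    then have "s = top"
      using top.not_eq_extremum by blast
    then have "Inf (peak R) = s"
      using s(2) by (simp add: top_unique)
    then have "x' \<in> peak R"
      using in_peak_if_pref_peak[OF U lo] s(4)[of s] s(1) by simp
    then show False
      using Inf_lower[of x' "peak R"] assms(2,3) by simp
  qed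
  then have "R x s"
    using pref_lower_endpoint[OF R assms(2) s(1)] s(4) by blast
  then show False
    using U_dom_trans[OF U _ s(3)] not_pref by blast
qed

lemma D_subset_C_dom: "D \<subseteq> C_dom"
proof
  fix R assume R: "R \<in> D"
  show "R \<in> C_dom"
    unfolding C_dom_def
  proof (intro CollectI conjI allI impI)
    show "R \<in> U_dom"
      using R D_sub by blast
    show "peak R = {Inf (peak R)..Sup (peak R)}"
      using R by (rule peak_eq_interval)
    fix x x' :: ennreal
    assume "x \<noteq> \<infinity> \<and> x' \<noteq> \<infinity> \<and>
      (x' < x \<and> x \<le> Inf (peak R) \<or> Sup (peak R) \<le> x \<and> x < x')"
    then show "R x x'"
      using pref_increasing_below_peak[OF R] pref_decreasing_above_peak[OF R]
      by (auto simp: less_top)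
  qed
qed

end

theorem lemma4:
  fixes D :: "pref set" and n :: nat
  assumes "2 \<le> n"
    and "SP_dom \<subseteq> D" and "D \<subseteq> U_dom"
    and "\<exists>\<phi>. is_rule D n \<phi> \<and> own_peak_only D n \<phi> \<and> efficient D n \<phi>
              \<and> equal_division_guarantee D n \<phi> \<and> NOM D n \<phi>"
  shows "D \<subseteq> C_dom"
proof -
  obtain \<phi> where "is_rule D n \<phi>" "own_peak_only D n \<phi>" "efficient D n \<phi>"
    "equal_division_guarantee D n \<phi>" "NOM D n \<phi>"
    using assms(4) by blast
  then interpret efficient_NOM_rule D n \<phi>
    using assms(1-3) by unfold_locales auto
  show ?thesis
    by (rule D_subset_C_dom)
qed

end
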